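(* Let $n\ge1$ and $\pi\in L_{n+1}$. Then there exist unique elements $\pi_j\in R_j^L$, $0\le j\le n-1$, such that $\pi=\pi_0\pi_1\cdots\pi_{n-1}$.
   Context: $B_m$ is the group of bijections $\sigma$ of $\{\pm1,\dots,\pm m\}$ with $\sigma(-i)=-\sigma(i)$, written in window notation $[\sigma(1),\dots,\sigma(m)]$, with product $(\sigma\tau)(i)=\sigma(\tau(i))$. Let $s_0=[-1,2,\dots,m]$ and $s_i=$ the transposition of $i$ and $i+1$. For $\sigma\in B_m$ let $|\sigma|$ be the permutation $i\mapsto|\sigma(i)|$, and $L_m=\{\sigma\in B_m:|\sigma|\text{ is even}\}$. In $L_{n+1}$ let $a_0=s_0$ and $a_i=s_1s_{i+1}$ for $1\le i\le n-1$. Let $R_0^L=\{1,\ a_0,\ a_1a_0a_1^{-1},\ a_0a_1a_0a_1^{-1}\}$ (here, when $n=1$, $a_1$ denotes $s_1s_2$ computed in a larger group is not needed: for $n=1$ one has $R_0^L=L_2$ as an explicit set, namely $\{[1,2],[-1,2],[1,-2],[-1,-2]\}$). For $1\le j\le n-1$ let $R_j^A=\{1,\ a_j,\ a_ja_{j-1},\ \dots,\ a_j\cdots a_2,\ a_j\cdots a_2a_1,\ a_j\cdots a_2a_1^{-1}\}$ and $R_j^L=R_j^A\cup\{a_j\cdots a_2a_1^{-1}a_0,\ a_j\cdots a_2a_1^{-1}a_0a_1^{-1}\}\cup\{a_j\cdots a_2a_1^{-1}a_0a_1a_2\cdots a_k:\ 1\le k\le j\}$, where $a_j\cdots a_2$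 is the empty product when $j=1$. *)

theory Defs
  imports "HOL-Combinatorics.Combinatorics"
begin

text \<open>Signed permutations are represented as functions on int that are odd
  (sigma(-i) = -sigma(i)), permute the set of nonzero integers of absolute value
  at most m, and fix every other integer. Product is composition:
  (sigma tau)(i) = sigma(tau(i)).\<close>

definition signed_support :: "nat \<Rightarrow> int set" where
  "signed_support m = {i. i \<noteq> 0 \<and> \<bar>i\<bar> \<le> int m}"

definition B :: "nat \<Rightarrow> (int \<Rightarrow> int) set" where
  "B m = {\<sigma>. \<sigma> permutes signed_support m \<and> (\<forall>i. \<sigma> (- i) = - \<sigma> i)}"

definition abs_perm :: "nat \<Rightarrow> (int \<Rightarrow> int) \<Rightarrow> (int \<Rightarrow> int)" where
  "abs_perm m \<sigma> = (\<lambda>i. if 1 \<le> i \<and> i \<le> int m then \<bar>\<sigma> i\<bar> else i)"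

definition L :: "nat \<Rightarrow> (int \<Rightarrow> int) set" where
  "L m = {\<sigma> \<in> B m. evenperm (abs_perm m \<sigma>)}"

definition s0 :: "int \<Rightarrow> int" where
  "s0 = (\<lambda>x. if x = 1 then -1 else if x = -1 then 1 else x)"

definition s :: "nat \<Rightarrow> int \<Rightarrow> int" where
  "s i = (\<lambda>x. if x = int i then int i + 1 else if x = int i + 1 then int i
              else if x = - int i then - (int i + 1) else if x = - (int i + 1) then - int i
              else x)"

definition a :: "nat \<Rightarrow> int \<Rightarrow> int" where
  "a i = (if i = 0 then s0 else s 1 \<circ> s (i + 1))"

text \<open>desc j k = a_j a_{j-1} ... a_k (empty product = identity if k > j).\<close>
definition desc :: "nat \<Rightarrow> nat \<Rightarrow> int \<Rightarrow> int" where
  "desc j k = foldr (\<circ>) (map a (rev [k..<Suc j])) id"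

definition asc :: "nat \<Rightarrow> nat \<Rightarrow> int \<Rightarrow> int" where
  "asc k l = foldr (\<circ>) (map a [k..<Suc l]) id"

definition R0L :: "nat \<Rightarrow> (int \<Rightarrow> int) set" where
  "R0L n = (if n = 1 then L 2
            else {id, a 0, a 1 \<circ> a 0 \<circ> inv (a 1), a 0 \<circ> a 1 \<circ> a 0 \<circ> inv (a 1)})"

definition RA :: "nat \<Rightarrow> (int \<Rightarrow> int) set" where
  "RA j = {desc j k | k. 1 \<le> k \<and> k \<le> j + 1} \<union> {desc j 2 \<circ> inv (a 1)}"

definition RL :: "nat \<Rightarrow> nat \<Rightarrow> (int \<Rightarrow> int) set" where
  "RL n j = (if j = 0 then R0L n else
     RA j \<union> {desc j 2 \<circ> inv (a 1) \<circ> a 0, desc j 2 \<circ> inv (a 1) \<circ> a 0 \<circ> inv (a 1)}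
          \<union> {desc j 2 \<circ> inv (a 1) \<circ> a 0 \<circ> asc 1 k | k. 1 \<le> k \<and> k \<le> j})"

end

theory Submission
  imports Defs
begin

(* L m is the stabiliser of m + 1 in L (Suc m), so the right cosets of L (j + 1) in L (j + 2)
   are indexed by the 2 (j + 2) possible values v of inv \<sigma> (j + 2).  For j \<ge> 1 the set R_j^L
   contains, for every such v, exactly one element sending v to j + 2, i.e. it is a right
   transversal, while R_0^L is all of L 2.  Splitting off the last factor inductively, the product
   map R_0^L \<times> ... \<times> R_(n-1)^L \<rightarrow> L (n + 1) is therefore a bijection. *)

lemma B_odd: "\<sigma> \<in> B m \<Longrightarrow> \<sigma> (- i) = - \<sigma> i"
  by (simp add: B_def)

lemma B_permutes: "\<sigma> \<in> B m \<Longrightarrow> \<sigma> permutes signed_support m"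
  by (simp add: B_def)

lemma id_in_B: "id \<in> B m"
  by (simp add: B_def permutes_id)

lemma comp_in_B: "\<sigma> \<in> B m \<Longrightarrow> \<tau> \<in> B m \<Longrightarrow> \<sigma> \<circ> \<tau> \<in> B m"
  by (simp add: B_def permutes_compose)

lemma inv_in_B:
  assumes "\<sigma> \<in> B m"
  shows "inv \<sigma> \<in> B m"
proof -
  have perm: "\<sigma> permutes signed_support m"
    using assms by (rule B_permutes)
  have "inv \<sigma> (- i) = - inv \<sigma> i" for i
    using B_odd[OF assms, of "inv \<sigma> i"] by (simp add: permutes_inv_eq[OF perm] permutes_inverses[OF perm])
  with permutes_inv[OF perm] show ?thesis
    by (simp add: B_def)
qed

lemma involution_in_B:
  assumes "\<And>x. f (f x) = x" and "\<And>x. x \<notin> signed_support m \<Longrightarrow> f x = x"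
    and "\<And>x. f (- x) = - f x"
  shows "f \<in> B m"
proof -
  have "\<forall>y. \<exists>!x. f x = y"
    using assms(1) by metis
  with assms show ?thesis
    by (simp add: B_def permutes_def)
qed

lemma B_eqI:
  assumes "\<sigma> \<in> B m" "\<tau> \<in> B m" and agree: "\<And>i. 1 \<le> i \<Longrightarrow> i \<le> int m \<Longrightarrow> \<sigma> i = \<tau> i"
  shows "\<sigma> = \<tau>"
proof
  fix x
  show "\<sigma> x = \<tau> x"
  proof (cases "x \<in> signed_support m")
    case True
    then consider "1 \<le> x" "x \<le> int m" | "1 \<le> - x" "- x \<le> int m"
      by (force simp: signed_support_def)
    then show ?thesis
      by cases (use agree B_odd[OF assms(1), of "- x"] B_odd[OF assms(2), of "- x"] in auto)
  next
    case False
    then show ?thesis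
      using permutes_not_in B_permutes assms(1,2) by metis
  qed
qed

lemma abs_perm_comp:
  assumes "\<sigma> \<in> B m" "\<tau> \<in> B m"
  shows "abs_perm m (\<sigma> \<circ> \<tau>) = abs_perm m \<sigma> \<circ> abs_perm m \<tau>"
proof
  fix i
  have "\<bar>\<sigma> \<bar>\<tau> i\<bar>\<bar> = \<bar>\<sigma> (\<tau> i)\<bar>"
    using B_odd[OF assms(1), of "\<tau> i"] by (cases "\<tau> i \<ge> 0") auto
  moreover have "1 \<le> \<bar>\<tau> i\<bar> \<and> \<bar>\<tau> i\<bar> \<le> int m" if "1 \<le> i" "i \<le> int m"
    using that permutes_in_image[OF B_permutes[OF assms(2)], of i] by (auto simp: signed_support_def)
  ultimately show "abs_perm m (\<sigma> \<circ> \<tau>) i = (abs_perm m \<sigma> \<circ> abs_perm m \<tau>) i"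
    by (auto simp: abs_perm_def)
qed

lemma abs_perm_id: "abs_perm m id = id"
  by (auto simp: abs_perm_def)

lemma abs_perm_inverses:
  assumes "\<sigma> \<in> B m"
  shows "abs_perm m \<sigma> \<circ> abs_perm m (inv \<sigma>) = id" and "abs_perm m (inv \<sigma>) \<circ> abs_perm m \<sigma> = id"
  using abs_perm_comp[OF assms inv_in_B[OF assms]] abs_perm_comp[OF inv_in_B[OF assms] assms]
    permutes_inv_o[OF B_permutes[OF assms]] by (simp_all add: abs_perm_id)

lemma abs_perm_inv: "\<sigma> \<in> B m \<Longrightarrow> abs_perm m (inv \<sigma>) = inv (abs_perm m \<sigma>)"
  using inv_unique_comp[OF abs_perm_inverses] by simp

lemma permutation_abs_perm:
  assumes "\<sigma> \<in> B m"
  shows "permutation (abs_perm m \<sigma>)"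
proof -
  have "bij (abs_perm m \<sigma>)"
    using abs_perm_inverses[OF assms] o_bij by blast
  moreover have "\<forall>x. x \<notin> {1..int m} \<longrightarrow> abs_perm m \<sigma> x = x"
    by (simp add: abs_perm_def)
  ultimately show ?thesis
    by (intro permutation_lemma[of "{1..int m}"]) simp_all
qed

lemma L_permutes: "\<sigma> \<in> L m \<Longrightarrow> \<sigma> permutes signed_support m"
  by (simp add: L_def B_def)

lemma id_in_L: "id \<in> L m"
  by (simp add: L_def id_in_B abs_perm_id)

lemma comp_in_L:
  assumes "\<sigma> \<in> L m" "\<tau> \<in> L m"
  shows "\<sigma> \<circ> \<tau> \<in> L m"
  using assms comp_in_B[of \<sigma> m \<tau>]
  by (simp add: L_def abs_perm_comp evenperm_comp permutation_abs_perm)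

lemma inv_in_L: "\<sigma> \<in> L m \<Longrightarrow> inv \<sigma> \<in> L m"
  by (simp add: L_def inv_in_B abs_perm_inv evenperm_inv permutation_abs_perm)

lemma foldr_comp_in_L: "(\<And>f. f \<in> set fs \<Longrightarrow> f \<in> L m) \<Longrightarrow> foldr (\<circ>) fs id \<in> L m"
  by (induction fs) (auto intro: comp_in_L id_in_L)

lemma abs_perm_Suc:
  assumes "\<sigma> (int m + 1) = int m + 1"
  shows "abs_perm (Suc m) \<sigma> = abs_perm m \<sigma>"
proof -
  have "(1 \<le> i \<and> i \<le> int (Suc m)) \<longleftrightarrow> (1 \<le> i \<and> i \<le> int m) \<or> i = int m + 1" for i
    by auto
  with assms show ?thesis
    by (auto simp: abs_perm_def fun_eq_iff)
qed

lemma L_Suc_mono: "L m \<subseteq> L (Suc m)"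
proof
  fix \<sigma> assume "\<sigma> \<in> L m"
  then have B: "\<sigma> \<in> B m" and even: "evenperm (abs_perm m \<sigma>)"
    by (auto simp: L_def)
  have "\<sigma> (int m + 1) = int m + 1"
    using permutes_not_in[OF B_permutes[OF B]] by (simp add: signed_support_def)
  moreover have "\<sigma> \<in> B (Suc m)"
    using B permutes_subset[of \<sigma> "signed_support m" "signed_support (Suc m)"]
    by (simp add: B_def subset_iff signed_support_def)
  ultimately show "\<sigma> \<in> L (Suc m)"
    using even by (simp add: L_def abs_perm_Suc)
qed

lemma L_mono: "m \<le> k \<Longrightarrow> L m \<subseteq> L k"
  using lift_Suc_mono_le[of L] L_Suc_mono by blast

lemma L_stabilizer:
  assumes "\<sigma> \<in> L (Suc m)" and fixed: "\<sigma> (int m + 1) = int m + 1"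
  shows "\<sigma> \<in> L m"
proof -
  have B: "\<sigma> \<in> B (Suc m)"
    using assms(1) by (simp add: L_def)
  have "\<sigma> (- (int m + 1)) = - (int m + 1)"
    using B_odd[OF B, of "int m + 1"] fixed by simp
  moreover have "signed_support (Suc m) - signed_support m = {int m + 1, - (int m + 1)}"
    by (auto simp: signed_support_def)
  ultimately have "\<sigma> permutes signed_support m"
    using fixed by (intro permutes_superset[OF B_permutes[OF B]]) auto
  with assms show ?thesis
    by (simp add: L_def B_def abs_perm_Suc)
qed


section \<open>Factorisation along right transversals\<close>

text \<open>By \<open>L_stabilizer\<close> the right cosets of L m in L (Suc m) are the fibres of r \<mapsto> inv r (m + 1),
  so R meets every right coset exactly once.\<close>
definition right_transversal :: "nat \<Rightarrow> (int \<Rightarrow> int) set \<Rightarrow> bool" where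
  "right_transversal m R \<longleftrightarrow>
     R \<subseteq> L (Suc m) \<and> (\<forall>v \<in> signed_support (Suc m). \<exists>!r \<in> R. r v = int m + 1)"

lemma right_transversal_image:
  assumes f_in_L: "\<And>v. v \<in> signed_support (Suc m) \<Longrightarrow> f v \<in> L (Suc m)"
    and f_top: "\<And>v. v \<in> signed_support (Suc m) \<Longrightarrow> f v v = int m + 1"
  shows "right_transversal m (f ` signed_support (Suc m))"
  unfolding right_transversal_def
proof (intro conjI ballI)
  show "f ` signed_support (Suc m) \<subseteq> L (Suc m)"
    using f_in_L by blast
next
  fix v assume v: "v \<in> signed_support (Suc m)"
  show "\<exists>!r \<in> f ` signed_support (Suc m). r v = int m + 1"
  proof (rule ex1I)
    show "f v \<in> f ` signed_support (Suc m) \<and> f v v = int m + 1"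
      using v f_top by blast
  next
    fix r assume "r \<in> f ` signed_support (Suc m) \<and> r v = int m + 1"
    then obtain w where w: "w \<in> signed_support (Suc m)" and r: "r = f w" "f w v = f w w"
      using f_top by auto
    then have "v = w"
      using permutes_inj[OF L_permutes[OF f_in_L[OF w]]] by (simp add: inj_eq)
    with r show "r = f v"
      by simp
  qed
qed

lemma L_apply_top: "\<tau> \<in> L m \<Longrightarrow> \<tau> (int m + 1) = int m + 1"
  using permutes_not_in[OF L_permutes] by (simp add: signed_support_def)

lemma L_Suc_inv_apply_top:
  assumes "\<sigma> \<in> L (Suc m)"
  shows "inv \<sigma> (int m + 1) \<in> signed_support (Suc m)" and "\<sigma> (inv \<sigma> (int m + 1)) = int m + 1"
  using permutes_in_image[OF permutes_inv[OF L_permutes[OF assms]]] permutes_inverses[OF L_permutes[OF assms]]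
  by (simp_all add: signed_support_def)

lemma right_transversal_comp_cancel:
  assumes "right_transversal m R" and \<tau>: "\<tau> \<in> L m" "\<tau>' \<in> L m" and r: "r \<in> R" "r' \<in> R"
    and eq: "\<tau> \<circ> r = \<tau>' \<circ> r'"
  shows "\<tau> = \<tau>'" and "r = r'"
proof -
  let ?top = "int m + 1"
  have R: "R \<subseteq> L (Suc m)"
    using assms(1) by (simp add: right_transversal_def)
  define v where "v = inv r ?top"
  have v: "v \<in> signed_support (Suc m)" "r v = ?top"
    unfolding v_def using L_Suc_inv_apply_top R r(1) by blast+
  have "\<tau>' (r' v) = \<tau>' ?top"
    using eq v(2) L_apply_top[OF \<tau>(1)] L_apply_top[OF \<tau>(2)] by (metis comp_apply)
  then have "r' v = ?top"
    using injD[OF permutes_inj[OF L_permutes[OF \<tau>(2)]]] by blast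
  with assms(1) v r show "r = r'"
    unfolding right_transversal_def by blast
  with eq show "\<tau> = \<tau>'"
    using permutes_inv_o(1)[OF L_permutes] R r(1) by (metis o_assoc o_id subsetD)
qed

lemma right_transversal_decomp:
  assumes "right_transversal m R" and \<pi>: "\<pi> \<in> L (Suc m)"
  obtains \<tau> r where "\<tau> \<in> L m" "r \<in> R" "\<pi> = \<tau> \<circ> r"
proof -
  let ?top = "int m + 1"
  have R: "R \<subseteq> L (Suc m)"
    using assms(1) by (simp add: right_transversal_def)
  obtain r where r: "r \<in> R" "r (inv \<pi> ?top) = ?top"
    using assms(1) L_Suc_inv_apply_top(1)[OF \<pi>] unfolding right_transversal_def by blast
  have r_perm: "r permutes signed_support (Suc m)"
    using R r(1) L_permutes by blast
  have "\<pi> \<circ> inv r \<in> L (Suc m)"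
    using \<pi> r(1) R by (blast intro: comp_in_L inv_in_L)
  moreover have "inv r ?top = inv \<pi> ?top"
    using r(2) by (simp add: permutes_inv_eq[OF r_perm])
  then have "(\<pi> \<circ> inv r) ?top = ?top"
    using L_Suc_inv_apply_top(2)[OF \<pi>] by simp
  ultimately have "\<pi> \<circ> inv r \<in> L m"
    by (rule L_stabilizer)
  moreover have "\<pi> = (\<pi> \<circ> inv r) \<circ> r"
    using permutes_inv_o(2)[OF r_perm] by (simp add: o_assoc[symmetric])
  ultimately show ?thesis
    using r(1) that by blast
qed

lemma bij_betw_comp_right_transversal:
  assumes "right_transversal m R"
  shows "bij_betw (\<lambda>(\<tau>, r). \<tau> \<circ> r) (L m \<times> R) (L (Suc m))"
proof -
  have "inj_on (\<lambda>(\<tau>, r). \<tau> \<circ> r) (L m \<times> R)"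
    using right_transversal_comp_cancel[OF assms] by (auto intro!: inj_onI)
  moreover have "(\<lambda>(\<tau>, r). \<tau> \<circ> r) ` (L m \<times> R) \<subseteq> L (Suc m)"
    using assms L_Suc_mono by (auto simp: right_transversal_def intro!: comp_in_L)
  moreover have "L (Suc m) \<subseteq> (\<lambda>(\<tau>, r). \<tau> \<circ> r) ` (L m \<times> R)"
    using right_transversal_decomp[OF assms] by blast
  ultimately show ?thesis
    by (auto simp: bij_betw_def)
qed

lemma bij_betw_ex1_preimage: "bij_betw f X Y \<Longrightarrow> y \<in> Y \<Longrightarrow> \<exists>!x. x \<in> X \<and> f x = y"
  unfolding bij_betw_def inj_on_def by blast

definition choice_lists :: "(nat \<Rightarrow> 'a set) \<Rightarrow> nat \<Rightarrow> 'a list set" where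
  "choice_lists A n = {xs. length xs = n \<and> (\<forall>j<n. xs ! j \<in> A j)}"

lemma choice_lists_Suc:
  "choice_lists A (Suc n) = (\<lambda>(xs, x). xs @ [x]) ` (choice_lists A n \<times> A n)"
proof (intro equalityI subsetI)
  fix xs assume xs: "xs \<in> choice_lists A (Suc n)"
  then have xs_nth: "xs ! j \<in> A j" if "j \<le> n" for j
    using that by (simp add: choice_lists_def)
  obtain ys y where ys: "xs = ys @ [y]" and len: "length ys = n"
    using xs by (cases xs rule: rev_cases) (auto simp: choice_lists_def)
  have "ys ! j \<in> A j" if "j < n" for j
    using xs_nth[of j] that by (simp add: ys len nth_append_left)
  moreover have "y \<in> A n"
    using xs_nth[of n] by (simp add: ys len[symmetric])
  ultimately show "xs \<in> (\<lambda>(xs, x). xs @ [x]) ` (choice_lists A n \<times> A n)"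
    using ys len by (auto simp: choice_lists_def)
next
  fix xs assume "xs \<in> (\<lambda>(xs, x). xs @ [x]) ` (choice_lists A n \<times> A n)"
  then show "xs \<in> choice_lists A (Suc n)"
    by (auto simp: choice_lists_def nth_append less_Suc_eq)
qed

lemma bij_betw_snoc_choice_lists:
  "bij_betw (\<lambda>(xs, x). xs @ [x]) (choice_lists A n \<times> A n) (choice_lists A (Suc n))"
  unfolding bij_betw_def choice_lists_Suc by (auto intro: inj_onI)

lemma foldr_comp_snoc: "foldr (\<circ>) (fs @ [f]) id = foldr (\<circ>) fs id \<circ> f"
  by (induction fs) (simp_all add: o_assoc)

lemma bij_betw_foldr_comp_choice_lists:
  assumes "R 0 = L 2" and "\<And>j. 1 \<le> j \<Longrightarrow> right_transversal (Suc j) (R j)" and "1 \<le> n"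
  shows "bij_betw (\<lambda>ps. foldr (\<circ>) ps id) (choice_lists R n) (L (Suc n))"
  using \<open>1 \<le> n\<close>
proof (induction n rule: dec_induct)
  case base
  have "choice_lists R 1 = (\<lambda>(xs, x). xs @ [x]) ` ({[]} \<times> L 2)"
    using assms(1) choice_lists_Suc[of R 0] by (simp add: choice_lists_def)
  also have "\<dots> = (\<lambda>p. [p]) ` L 2"
    by (auto simp: image_def)
  finally have "choice_lists R 1 = (\<lambda>p. [p]) ` L 2" .
  then have "bij_betw (\<lambda>p. [p]) (L 2) (choice_lists R 1)"
    by (simp add: bij_betw_def inj_on_def)
  moreover have "(\<lambda>ps. foldr (\<circ>) ps id) \<circ> (\<lambda>p. [p]) = id"
    by (simp add: fun_eq_iff)
  ultimately show ?case
    using bij_betw_comp_iff bij_betw_id by (metis numeral_2_eq_2 One_nat_def)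
next
  case (step k)
  have "bij_betw ((\<lambda>(\<tau>, r). \<tau> \<circ> r) \<circ> map_prod (\<lambda>ps. foldr (\<circ>) ps id) id)
      (choice_lists R k \<times> R k) (L (Suc (Suc k)))"
    using bij_betw_map_prod[OF step.IH bij_betw_id]
      bij_betw_comp_right_transversal[OF assms(2)[OF step.hyps(1)]] by (rule bij_betw_trans)
  moreover have "(\<lambda>(\<tau>, r). \<tau> \<circ> r) \<circ> map_prod (\<lambda>ps. foldr (\<circ>) ps id) id
      = (\<lambda>ps. foldr (\<circ>) ps id) \<circ> (\<lambda>(ps, r). ps @ [r])"
    by (auto simp: fun_eq_iff foldr_comp_snoc simp del: foldr_append)
  ultimately show ?case
    using bij_betw_comp_iff[OF bij_betw_snoc_choice_lists] by metis
qed

lemma s0_in_B: "1 \<le> m \<Longrightarrow> s0 \<in> B m"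
  by (rule involution_in_B) (auto simp: s0_def signed_support_def)

lemma s_in_B: "1 \<le> k \<Longrightarrow> k + 1 \<le> m \<Longrightarrow> s k \<in> B m"
  by (rule involution_in_B) (auto simp: s_def signed_support_def)

lemma abs_perm_s0: "abs_perm m s0 = id"
  by (auto simp: abs_perm_def s0_def)

lemma abs_perm_s:
  "1 \<le> k \<Longrightarrow> k + 1 \<le> m \<Longrightarrow> abs_perm m (s k) = Transposition.transpose (int k) (int k + 1)"
  by (auto simp: abs_perm_def s_def fun_eq_iff Transposition.transpose_def)

lemma a_in_L:
  assumes "i + 2 \<le> m"
  shows "a i \<in> L m"
proof (cases "i = 0")
  case True
  with assms show ?thesis
    by (simp add: L_def a_def s0_in_B abs_perm_s0)
next
  case False
  then have B: "s 1 \<in> B m" "s (i + 1) \<in> B m"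
    using assms by (auto intro: s_in_B)
  have "abs_perm m (a i) = Transposition.transpose 1 2 \<circ> Transposition.transpose (int i + 1) (int i + 2)"
    using False assms abs_perm_comp[OF B] abs_perm_s[of 1 m] abs_perm_s[of "i + 1" m]
    by (simp add: a_def add.commute)
  then have "evenperm (abs_perm m (a i))"
    by (simp add: evenperm_comp permutation_swap_id evenperm_swap)
  with False show ?thesis
    using comp_in_B[OF B] by (simp add: L_def a_def)
qed

lemma desc_in_L: "desc j k \<in> L (j + 2)"
  unfolding desc_def by (rule foldr_comp_in_L) (auto intro: a_in_L)

lemma asc_in_L: "asc k l \<in> L (l + 2)"
  unfolding asc_def by (rule foldr_comp_in_L) (auto intro: a_in_L)

lemma desc_Suc: "k \<le> Suc j \<Longrightarrow> desc (Suc j) k = a (Suc j) \<circ> desc j k"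
  by (simp add: desc_def)

lemma desc_empty: "desc j (Suc j) = id"
  by (simp add: desc_def)

lemma asc_Suc: "asc 1 (Suc k) = asc 1 k \<circ> a (Suc k)"
  using foldr_comp_snoc[of "map a [1..<Suc k]" "a (Suc k)"] by (simp add: asc_def)

lemma a_apply_succ: "1 \<le> k \<Longrightarrow> a k (int k + 1) = int k + 2"
  by (simp add: a_def s_def)

lemma a_apply_neg: "2 \<le> k \<Longrightarrow> a k (- (int k + 2)) = - (int k + 1)"
  by (simp add: a_def s_def)

lemma a_0_apply: "a 0 (- 1) = 1"
  by (simp_all add: a_def s_def s0_def)

lemma inv_a_1_apply: "inv (a 1) 1 = 3" "inv (a 1) 2 = 1" "inv (a 1) 3 = 2" "inv (a 1) (- 2) = - 1"
proof -
  have "a 1 permutes signed_support 3"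
    using a_in_L[of 1 3] by (simp add: L_permutes)
  then show "inv (a 1) 1 = 3" "inv (a 1) 2 = 1" "inv (a 1) 3 = 2" "inv (a 1) (- 2) = - 1"
    by (simp_all add: permutes_inv_eq a_def s_def)
qed

lemma desc_apply: "1 \<le> k \<Longrightarrow> k \<le> j + 1 \<Longrightarrow> desc j k (int k + 1) = int j + 2"
proof (induction j)
  case 0
  then show ?case
    using desc_empty[of 0] by simp
next
  case (Suc j)
  show ?case
  proof (cases "k = Suc j + 1")
    case True
    then show ?thesis
      using desc_empty[of "Suc j"] by simp
  next
    case False
    with Suc show ?thesis
      using desc_Suc[of k j] a_apply_succ[of "Suc j"] by (simp add: add.commute)
  qed
qed

lemma asc_apply: "1 \<le> k \<Longrightarrow> asc 1 k (- (int k + 2)) = - 1"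
proof (induction k rule: dec_induct)
  case base
  then show ?case
    by (simp add: asc_def a_def s_def)
next
  case (step k)
  then show ?case
    using a_apply_neg[of "Suc k"] asc_Suc[of k] by (simp add: add.commute)
qed

section \<open>The sets R_j^L\<close>

text \<open>RL_rep j v is the element of R_j^L sending v to j + 2: a_j \<dots> a_k sends k + 1 there, and
  \<rho> = a_j \<dots> a_2 a_1\<inverse> sends 1 there, so the remaining elements \<rho> a_0 \<dots> first send v to 1.\<close>
definition RL_rep :: "nat \<Rightarrow> int \<Rightarrow> int \<Rightarrow> int" where
  "RL_rep j v =
     (if 2 \<le> v then desc j (nat (v - 1))
      else if v = 1 then desc j 2 \<circ> inv (a 1)
      else if v = - 1 then desc j 2 \<circ> inv (a 1) \<circ> a 0
      else if v = - 2 then desc j 2 \<circ> inv (a 1) \<circ> a 0 \<circ> inv (a 1)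
      else desc j 2 \<circ> inv (a 1) \<circ> a 0 \<circ> asc 1 (nat (- v - 2)))"

lemma signed_support_split:
  "signed_support (j + 2) =
     (\<lambda>k. int k + 1) ` {1..j + 1} \<union> {1, - 1, - 2} \<union> (\<lambda>k. - (int k + 2)) ` {1..j}"
proof (intro equalityI subsetI)
  fix v assume v: "v \<in> signed_support (j + 2)"
  consider "2 \<le> v" | "v \<in> {1, - 1, - 2}" | "v \<le> - 3"
    using v by (force simp: signed_support_def)
  then show "v \<in> (\<lambda>k. int k + 1) ` {1..j + 1} \<union> {1, - 1, - 2} \<union> (\<lambda>k. - (int k + 2)) ` {1..j}"
  proof cases
    case 1
    then have "v \<in> (\<lambda>k. int k + 1) ` {1..j + 1}"
      using v by (intro image_eqI[of _ _ "nat v - 1"]) (auto simp: signed_support_def)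
    then show ?thesis
      by blast
  next
    case 3
    then have "v \<in> (\<lambda>k. - (int k + 2)) ` {1..j}"
      using v by (intro image_eqI[of _ _ "nat (- v) - 2"]) (auto simp: signed_support_def)
    then show ?thesis
      by blast
  qed blast
qed (auto simp: signed_support_def)

lemma RL_eq_image_RL_rep:
  assumes "1 \<le> j"
  shows "RL n j = RL_rep j ` signed_support (j + 2)"
proof -
  let ?\<rho> = "desc j 2 \<circ> inv (a 1)"
  have "RL n j = desc j ` {1..j + 1} \<union> {?\<rho>, ?\<rho> \<circ> a 0, ?\<rho> \<circ> a 0 \<circ> inv (a 1)}
      \<union> (\<lambda>k. ?\<rho> \<circ> a 0 \<circ> asc 1 k) ` {1..j}"
    using assms unfolding RL_def RA_def by auto
  moreover have "RL_rep j ` (\<lambda>k. int k + 1) ` {1..j + 1} = desc j ` {1..j + 1}"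
    unfolding image_image by (intro image_cong) (auto simp: RL_rep_def)
  moreover have "RL_rep j ` {1, - 1, - 2} = {?\<rho>, ?\<rho> \<circ> a 0, ?\<rho> \<circ> a 0 \<circ> inv (a 1)}"
    by (auto simp: RL_rep_def)
  moreover have "RL_rep j ` (\<lambda>k. - (int k + 2)) ` {1..j} = (\<lambda>k. ?\<rho> \<circ> a 0 \<circ> asc 1 k) ` {1..j}"
    unfolding image_image by (intro image_cong) (auto simp: RL_rep_def)
  ultimately show ?thesis
    unfolding signed_support_split image_Un by simp
qed

lemma RL_rep_apply:
  assumes "1 \<le> j" and "v \<in> signed_support (j + 2)"
  shows "RL_rep j v v = int j + 2"
proof -
  have desc_3: "desc j 2 3 = int j + 2"
    using desc_apply[of 2 j] assms(1) by simp
  from assms(2) consider k where "1 \<le> k" "k \<le> j + 1" "v = int k + 1" | "v \<in> {1, - 1, - 2}"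
    | k where "1 \<le> k" "v = - (int k + 2)"
    unfolding signed_support_split by auto
  then show ?thesis
  proof cases
    case (1 k)
    then show ?thesis
      using desc_apply[of k j] by (simp add: RL_rep_def)
  next
    case 2
    then show ?thesis
      using desc_3 inv_a_1_apply a_0_apply by (auto simp: RL_rep_def)
  next
    case (3 k)
    then show ?thesis
      using desc_3 asc_apply[of k] inv_a_1_apply a_0_apply by (simp add: RL_rep_def)
  qed
qed

lemma RL_rep_in_L:
  assumes "1 \<le> j" and v: "v \<in> signed_support (j + 2)"
  shows "RL_rep j v \<in> L (j + 2)"
proof -
  have "nat (- v - 2) \<le> j"
    using v by (auto simp: signed_support_def)
  then have "asc 1 (nat (- v - 2)) \<in> L (j + 2)"
    using L_mono asc_in_L by (metis add_le_mono1 subsetD)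
  moreover have "inv (a 1) \<in> L (j + 2)" "a 0 \<in> L (j + 2)"
    using assms(1) by (simp_all add: inv_in_L a_in_L)
  ultimately show ?thesis
    unfolding RL_rep_def using desc_in_L[of j] by (auto intro!: comp_in_L)
qed

lemma right_transversal_RL:
  assumes "1 \<le> j"
  shows "right_transversal (Suc j) (RL n j)"
proof -
  have "right_transversal (Suc j) (RL_rep j ` signed_support (Suc (Suc j)))"
    using RL_rep_in_L[OF assms] RL_rep_apply[OF assms] by (intro right_transversal_image) simp_all
  then show ?thesis
    using RL_eq_image_RL_rep[OF assms] by simp
qed

lemma L_2_abs_apply:
  assumes "\<sigma> \<in> L 2"
  shows "\<bar>\<sigma> 1\<bar> = 1" and "\<bar>\<sigma> 2\<bar> = 2"
proof -
  have B: "\<sigma> \<in> B 2" and even: "evenperm (abs_perm 2 \<sigma>)"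
    using assms by (auto simp: L_def)
  have one_two: "1 \<le> i \<and> i \<le> 2 \<longleftrightarrow> i = 1 \<or> i = 2" for i :: int
    by arith
  have vals: "\<bar>\<sigma> i\<bar> \<in> {1, 2}" if "i \<in> {1, 2}" for i
    using that permutes_in_image[OF B_permutes[OF B], of i] by (auto simp: signed_support_def one_two)
  have distinct: "\<bar>\<sigma> 1\<bar> \<noteq> \<bar>\<sigma> 2\<bar>"
  proof
    assume "\<bar>\<sigma> 1\<bar> = \<bar>\<sigma> 2\<bar>"
    then have "abs_perm 2 \<sigma> 1 = abs_perm 2 \<sigma> 2"
      by (simp add: abs_perm_def)
    then show False
      using injD[OF bij_is_inj[OF permutation_bijective[OF permutation_abs_perm[OF B]]]] by force
  qed
  have "\<bar>\<sigma> 1\<bar> \<noteq> 2"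
  proof
    assume "\<bar>\<sigma> 1\<bar> = 2"
    moreover from this have "\<bar>\<sigma> 2\<bar> = 1"
      using vals[of 2] distinct by auto
    ultimately have "abs_perm 2 \<sigma> = Transposition.transpose 1 2"
      by (auto simp: abs_perm_def fun_eq_iff Transposition.transpose_def one_two)
    with even show False
      by (simp add: evenperm_swap)
  qed
  with vals[of 1] vals[of 2] distinct show "\<bar>\<sigma> 1\<bar> = 1" "\<bar>\<sigma> 2\<bar> = 2"
    by auto
qed

lemma L_2_eqI:
  assumes "\<sigma> \<in> L 2" "\<tau> \<in> L 2" "\<sigma> 1 = \<tau> 1" "\<sigma> 2 = \<tau> 2"
  shows "\<sigma> = \<tau>"
proof (rule B_eqI)
  show "\<sigma> \<in> B 2" "\<tau> \<in> B 2"
    using assms(1,2) by (simp_all add: L_def)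
  fix i :: int assume "1 \<le> i" "i \<le> int 2"
  then have "i = 1 \<or> i = 2"
    by arith
  with assms(3,4) show "\<sigma> i = \<tau> i"
    by auto
qed

lemma a_1_a_0_conj:
  shows "a 1 \<circ> a 0 \<circ> inv (a 1) \<in> L 2"
    and "(a 1 \<circ> a 0 \<circ> inv (a 1)) 1 = 1" and "(a 1 \<circ> a 0 \<circ> inv (a 1)) 2 = - 2"
proof -
  have "a 1 \<circ> a 0 \<circ> inv (a 1) \<in> L 3"
    by (intro comp_in_L inv_in_L a_in_L) simp_all
  moreover have "(a 1 \<circ> a 0 \<circ> inv (a 1)) 3 = 3"
    using inv_a_1_apply by (simp add: a_def s_def s0_def)
  ultimately show "a 1 \<circ> a 0 \<circ> inv (a 1) \<in> L 2"
    using L_stabilizer[of _ 2] by (simp add: numeral_eq_Suc)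
  show "(a 1 \<circ> a 0 \<circ> inv (a 1)) 1 = 1" "(a 1 \<circ> a 0 \<circ> inv (a 1)) 2 = - 2"
    using inv_a_1_apply by (simp_all add: a_def s_def s0_def)
qed

lemma L_2_eq: "L 2 = {id, a 0, a 1 \<circ> a 0 \<circ> inv (a 1), a 0 \<circ> a 1 \<circ> a 0 \<circ> inv (a 1)}"
proof -
  let ?c = "a 1 \<circ> a 0 \<circ> inv (a 1)"
  have a0: "a 0 \<in> L 2" "a 0 1 = - 1" "a 0 2 = 2" "a 0 (- 2) = - 2"
    by (simp_all add: a_in_L) (simp_all add: a_def s0_def)
  note c = a_1_a_0_conj
  have "\<sigma> = id \<or> \<sigma> = a 0 \<or> \<sigma> = ?c \<or> \<sigma> = a 0 \<circ> ?c" if \<sigma>: "\<sigma> \<in> L 2" for \<sigma>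
  proof -
    have "\<sigma> 1 \<in> {1, - 1}" "\<sigma> 2 \<in> {2, - 2}"
      using L_2_abs_apply[OF \<sigma>] by auto
    then consider "\<sigma> 1 = 1" "\<sigma> 2 = 2" | "\<sigma> 1 = - 1" "\<sigma> 2 = 2" | "\<sigma> 1 = 1" "\<sigma> 2 = - 2"
      | "\<sigma> 1 = - 1" "\<sigma> 2 = - 2"
      by auto
    then show ?thesis
    proof cases
      case 1
      then show ?thesis
        using L_2_eqI[OF \<sigma> id_in_L] by simp
    next
      case 2
      then show ?thesis
        using L_2_eqI[OF \<sigma> a0(1)] a0 by simp
    next
      case 3
      then show ?thesis
        using L_2_eqI[OF \<sigma> c(1)] c by simp
    next
      case 4
      then show ?thesis
        using L_2_eqI[OF \<sigma> comp_in_L[OF a0(1) c(1)]] a0 c by simp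
    qed
  qed
  moreover have "a 0 \<circ> ?c \<in> L 2"
    using comp_in_L[OF a0(1) c(1)] .
  ultimately show ?thesis
    using id_in_L a0(1) c(1) by (auto simp: o_assoc)
qed

lemma RL_0_eq: "RL n 0 = L 2"
  by (simp add: RL_def R0L_def L_2_eq)

theorem theorem2p11:
  fixes n :: nat and \<pi> :: "int \<Rightarrow> int"
  assumes "n \<ge> 1" and "\<pi> \<in> L (n + 1)"
  shows "\<exists>!ps :: (int \<Rightarrow> int) list. length ps = n \<and> (\<forall>j<n. ps ! j \<in> RL n j)
            \<and> \<pi> = foldr (\<circ>) ps id"
proof -
  have bij: "bij_betw (\<lambda>ps. foldr (\<circ>) ps id) (choice_lists (RL n) n) (L (Suc n))"
    by (rule bij_betw_foldr_comp_choice_lists[OF RL_0_eq right_transversal_RL assms(1)])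
  from bij_betw_ex1_preimage[OF this] assms(2) show ?thesis
    by (simp add: choice_lists_def eq_commute)
qed

end
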